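(* Let $n>d$, $\mathbf X\in\mathbb R^{n\times d}$ with full column rank, $1\le k<d$, and $\mathbf y\in\mathbb R^n$ with $\mathbf y\notin\operatorname{col}(\mathbf X)$. Let $\hat{\boldsymbol\beta}_{\mathrm{OLS}}=(\mathbf X^T\mathbf X)^{-1}\mathbf X^T\mathbf y$ and let $F=\frac{(\|\mathbf y-\mathbf P_{-1:k}\mathbf y\|^2-\|\mathbf y-\mathbf P\mathbf y\|^2)/k}{\|\mathbf y-\mathbf P\mathbf y\|^2/(n-d)}$ be the $F$-test statistic for $H_{1:k}:\boldsymbol\beta_{1:k}=\mathbf 0$. Then $$F=\frac{\|\mathbf V_{1:k}^T\mathbf X_{1:k}\hat{\boldsymbol\beta}_{1:k,\mathrm{OLS}}\|^2/k}{\big(\hat\sigma_{1:k}^2-\|\mathbf V_{1:k}^T\mathbf X_{1:k}\hat{\boldsymbol\beta}_{1:k,\mathrm{OLS}}\|^2\big)/(n-d)}.$$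
   Context: $\mathbf A_i$, $\mathbf A_{1:i}$, $\mathbf A_{-1:i}$ denote the $i$-th column, first $i$ columns, and submatrix with first $i$ columns removed (similarly for vectors). $\mathbf P$ is the orthogonal projection onto the column space of $\mathbf X$, and $\mathbf P_{-1:i}$ onto that of $\mathbf X_{-1:i}$. $\mathbf V\in\mathbb R^{n\times(n-d+k)}$ has orthonormal columns spanning the orthogonal complement of the column space of $\mathbf X_{-1:k}$, with first $k$ columns $\mathbf V_i=(\mathbf I-\mathbf P_{-1:i})\mathbf X_i/\|(\mathbf I-\mathbf P_{-1:i})\mathbf X_i\|$. $\hat\sigma_{1:k}=\|(\mathbf I-\mathbf P_{-1:k})\mathbf y\|$. *)

theory Defs
  imports "Jordan_Normal_Form.Gauss_Jordan_Elimination" "Jordan_Normal_Form.DL_Rank"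
begin

definition sqnorm :: "real vec \<Rightarrow> real" where
  "sqnorm v = v \<bullet> v"

definition take_cols :: "nat \<Rightarrow> real mat \<Rightarrow> real mat" where
  "take_cols i A = mat_of_cols (dim_row A) (take i (cols A))"

(* A_{-1:i}: first i columns removed *)
definition drop_cols :: "nat \<Rightarrow> real mat \<Rightarrow> real mat" where
  "drop_cols i A = mat_of_cols (dim_row A) (drop i (cols A))"

definition take_vec :: "nat \<Rightarrow> real vec \<Rightarrow> real vec" where
  "take_vec i v = vec i (\<lambda>j. v $ j)"

definition inv_mat :: "real mat \<Rightarrow> real mat" where
  "inv_mat A = the (mat_inverse A)"

definition proj_mat :: "real mat \<Rightarrow> real mat" where
  "proj_mat A = A * inv_mat (A\<^sup>T * A) * A\<^sup>T"

definition beta_ols :: "real mat \<Rightarrow> real vec \<Rightarrow> real vec" where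
  "beta_ols X y = inv_mat (X\<^sup>T * X) *\<^sub>v (X\<^sup>T *\<^sub>v y)"

(* V_i (1-indexed, 1 \<le> i \<le> k): (I - P_{-1:i}) X_i / \<parallel>(I - P_{-1:i}) X_i\<parallel> *)
definition Vcol :: "real mat \<Rightarrow> nat \<Rightarrow> real vec" where
  "Vcol X i = (let w = (1\<^sub>m (dim_row X) - proj_mat (drop_cols i X)) *\<^sub>v col X (i - 1)
               in (1 / sqrt (sqnorm w)) \<cdot>\<^sub>v w)"

definition Vfirst :: "real mat \<Rightarrow> nat \<Rightarrow> real mat" where
  "Vfirst X k = mat_of_cols (dim_row X) (map (Vcol X) [1..<k+1])"

definition F_stat :: "real mat \<Rightarrow> real vec \<Rightarrow> nat \<Rightarrow> real" where
  "F_stat X y k =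
     ((sqnorm (y - proj_mat (drop_cols k X) *\<^sub>v y) - sqnorm (y - proj_mat X *\<^sub>v y)) / real k)
     / (sqnorm (y - proj_mat X *\<^sub>v y) / (real (dim_row X) - real (dim_col X)))"

definition sigma_hat :: "real mat \<Rightarrow> real vec \<Rightarrow> nat \<Rightarrow> real" where
  "sigma_hat X y k = sqrt (sqnorm ((1\<^sub>m (dim_row X) - proj_mat (drop_cols k X)) *\<^sub>v y))"

end

theory Submission
  imports Defs
begin

(* Write w_i = (I - P_{-1:i}) X_i, so that V_i = w_i / |w_i|. The columns of X_{-1:i-1} are X_i
   followed by those of X_{-1:i}, and w_i is the component of X_i orthogonal to col(X_{-1:i}); hence
   P_{-1:i-1} = P_{-1:i} + V_i V_i^T and |(I - P_{-1:i}) y|^2 = |(I - P_{-1:i-1}) y|^2 + (V_i^T y)^2.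
   Telescoping from P_{-1:0} = P gives sigma_hat_{1:k}^2 = |y - P y|^2 + |V_{1:k}^T y|^2, which turns
   the denominator of F into the claimed one. Finally V_{1:k}^T y = V_{1:k}^T X_{1:k} beta_{1:k}:
   the difference y - X_{1:k} beta_{1:k} is y - P y, orthogonal to col(X), plus X_{-1:k} beta_{-1:k},
   which lies in col(X_{-1:k}); both are orthogonal to V_1, ..., V_k. *)

lemma sqnorm_nonneg: "sqnorm v \<ge> 0"
  using conjugate_square_ge_0_vec[of v] by (simp add: sqnorm_def)

lemma sqnorm_eq_0_iff: "v \<in> carrier_vec n \<Longrightarrow> sqnorm v = 0 \<longleftrightarrow> v = 0\<^sub>v n"
  using conjugate_square_eq_0_vec[of v n] by (simp add: sqnorm_def)

lemma sqnorm_add_orthogonal: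
  assumes "u \<in> carrier_vec n" "v \<in> carrier_vec n" "u \<bullet> v = 0"
  shows "sqnorm (u + v) = sqnorm u + sqnorm v"
proof -
  have "v \<bullet> u = 0" using assms comm_scalar_prod[of u n v] by simp
  then show ?thesis using assms
    by (simp add: sqnorm_def add_scalar_prod_distrib[of _ n] scalar_prod_add_distrib[of _ n])
qed

lemma vec_eq_if_diff_eq_0:
  assumes "(u :: 'a :: ab_group_add vec) \<in> carrier_vec n" "v \<in> carrier_vec n" "u - v = 0\<^sub>v n"
  shows "u = v"
proof (rule eq_vecI)
  fix i assume "i < dim_vec v"
  then have "(u - v) $ i = 0" using assms by simp
  then show "u $ i = v $ i" using \<open>i < dim_vec v\<close> assms(1,2) by simp
qed (use assms in simp)

lemma smult_zero_vec [simp]: "(a :: 'a :: mult_zero) \<cdot>\<^sub>v 0\<^sub>v n = 0\<^sub>v n"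
  by (intro eq_vecI) auto

lemma mult_vec_unit_vec:
  assumes "(A :: 'a :: semiring_1 mat) \<in> carrier_mat n m" "j < m"
  shows "A *\<^sub>v unit_vec m j = col A j"
  using assms by (intro eq_vecI) (auto simp: carrier_matD)

lemma one_minus_mat_mult_vec:
  assumes "(P :: 'a :: ring_1 mat) \<in> carrier_mat n n" "v \<in> carrier_vec n"
  shows "(1\<^sub>m n - P) *\<^sub>v v = v - P *\<^sub>v v"
  using assms by (subst minus_mult_distrib_mat_vec[of _ n n]) auto

lemma scalar_prod_mult_vec_eq_0:
  assumes "(A :: 'a :: comm_semiring_0 mat) \<in> carrier_mat n m" "c \<in> carrier_vec m" "u \<in> carrier_vec n"
    and "A\<^sup>T *\<^sub>v u = 0\<^sub>v m"
  shows "(A *\<^sub>v c) \<bullet> u = 0"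
  using transpose_vec_mult_scalar[OF assms(1-3)] comm_scalar_prod[of u n "A *\<^sub>v c"] assms
  by simp

definition trivial_kernel :: "'a :: semiring_0 mat \<Rightarrow> bool" where
  "trivial_kernel A \<longleftrightarrow>
     (\<forall>c \<in> carrier_vec (dim_col A).
        A *\<^sub>v c = 0\<^sub>v (dim_row A) \<longrightarrow> c = 0\<^sub>v (dim_col A))"

lemma trivial_kernelD:
  assumes "trivial_kernel A" "A \<in> carrier_mat n m" "c \<in> carrier_vec m" "A *\<^sub>v c = 0\<^sub>v n"
  shows "c = 0\<^sub>v m"
  using assms unfolding trivial_kernel_def by auto

lemma (in vec_space) full_rank_distinct_cols:
  assumes A: "A \<in> carrier_mat n nc" and r: "rank A = nc"
  shows "distinct (cols A)"
proof (rule ccontr)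
  assume nd: "\<not> distinct (cols A)"
  obtain S where S: "maximal S (\<lambda>T. T \<subseteq> set (cols A) \<and> lin_indpt T)"
    using maximal_exists[of "\<lambda>T. T \<subseteq> set (cols A) \<and> lin_indpt T" "card (set (cols A))" "{}"]
    by (meson List.finite_set card_mono empty_iff empty_subsetI finite_lin_indpt2 rev_finite_subset)
  then have "card S \<le> card (set (cols A))" by (simp add: card_mono maximal_def)
  also have "\<dots> < nc"
    using A nd card_distinct card_length cols_length carrier_matD(2) le_neq_implies_less by metis
  finally show False using rank_card_indpt[OF A S] r by simp
qed

lemma trivial_kernel_if_full_rank:
  assumes A: "(A :: real mat) \<in> carrier_mat n nc" and r: "vec_space.rank n A = nc"
  shows "trivial_kernel A"
  unfolding trivial_kernel_def
proof (intro ballI impI)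
  fix c assume c: "c \<in> carrier_vec (dim_col A)" and z: "A *\<^sub>v c = 0\<^sub>v (dim_row A)"
  have d: "distinct (cols A)" using vec_space.full_rank_distinct_cols[OF A r] .
  show "c = 0\<^sub>v (dim_col A)"
  proof (rule ccontr)
    assume "c \<noteq> 0\<^sub>v (dim_col A)"
    then have "module.lin_dep class_ring (module_vec TYPE(real) n) (set (cols A))"
      using vec_space.lin_depI[OF A _ _ _ d] c z A by auto
    then show False using vec_space.full_rank_lin_indpt[OF A r d] by simp
  qed
qed

section \<open>Orthogonal projections onto column spaces\<close>

lemma gram_mat_inverse:
  assumes A: "(A :: real mat) \<in> carrier_mat n m" and ker: "trivial_kernel A"
  shows "inv_mat (A\<^sup>T * A) \<in> carrier_mat m m"
    and "A\<^sup>T * A * inv_mat (A\<^sup>T * A) = 1\<^sub>m m"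
    and "inv_mat (A\<^sup>T * A) * (A\<^sup>T * A) = 1\<^sub>m m"
proof -
  have G: "A\<^sup>T * A \<in> carrier_mat m m" using A by auto
  have "det (A\<^sup>T * A) \<noteq> 0"
  proof
    assume "det (A\<^sup>T * A) = 0"
    then obtain c where c: "c \<in> carrier_vec m" "c \<noteq> 0\<^sub>v m" "(A\<^sup>T * A) *\<^sub>v c = 0\<^sub>v m"
      using det_0_iff_vec_prod_zero[OF G] by auto
    have "A\<^sup>T *\<^sub>v (A *\<^sub>v c) = 0\<^sub>v m" using c A by (metis assoc_mult_mat_vec transpose_carrier_mat)
    then have "sqnorm (A *\<^sub>v c) = 0"
      using scalar_prod_mult_vec_eq_0[OF A c(1), of "A *\<^sub>v c"] A c(1) unfolding sqnorm_def by simp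
    then have "A *\<^sub>v c = 0\<^sub>v n" using sqnorm_eq_0_iff[of "A *\<^sub>v c" n] A c(1) by simp
    then show False using trivial_kernelD[OF ker A c(1)] c(2) by simp
  qed
  then have "A\<^sup>T * A \<in> Units (ring_mat TYPE(real) m ())" using det_non_zero_imp_unit[OF G] by simp
  then obtain B where "mat_inverse (A\<^sup>T * A) = Some B"
    using mat_inverse(1)[OF G] by fastforce
  then show "inv_mat (A\<^sup>T * A) \<in> carrier_mat m m"
    and "A\<^sup>T * A * inv_mat (A\<^sup>T * A) = 1\<^sub>m m"
    and "inv_mat (A\<^sup>T * A) * (A\<^sup>T * A) = 1\<^sub>m m"
    using mat_inverse(2)[OF G] unfolding inv_mat_def by auto
qed

lemma dim_proj_mat [simp]: "dim_row (proj_mat A) = dim_row A" "dim_col (proj_mat A) = dim_row A"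
  unfolding proj_mat_def by auto

lemma proj_mat_carrier: "A \<in> carrier_mat n m \<Longrightarrow> proj_mat A \<in> carrier_mat n n"
  unfolding proj_mat_def by auto

lemma proj_mat_mult_vec:
  assumes A: "(A :: real mat) \<in> carrier_mat n m" and ker: "trivial_kernel A"
    and v: "v \<in> carrier_vec n"
  shows "proj_mat A *\<^sub>v v = A *\<^sub>v (inv_mat (A\<^sup>T * A) *\<^sub>v (A\<^sup>T *\<^sub>v v))"
proof -
  have inv: "inv_mat (A\<^sup>T * A) \<in> carrier_mat m m" using gram_mat_inverse(1)[OF A ker] .
  have "(A * inv_mat (A\<^sup>T * A) * A\<^sup>T) *\<^sub>v v = (A * inv_mat (A\<^sup>T * A)) *\<^sub>v (A\<^sup>T *\<^sub>v v)"
    using A inv v by (intro assoc_mult_mat_vec) auto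
  also have "\<dots> = A *\<^sub>v (inv_mat (A\<^sup>T * A) *\<^sub>v (A\<^sup>T *\<^sub>v v))"
    using A inv v by (intro assoc_mult_mat_vec) auto
  finally show ?thesis unfolding proj_mat_def .
qed

lemma transpose_mult_proj_residual:
  assumes A: "(A :: real mat) \<in> carrier_mat n m" and ker: "trivial_kernel A"
    and v: "v \<in> carrier_vec n"
  shows "A\<^sup>T *\<^sub>v (v - proj_mat A *\<^sub>v v) = 0\<^sub>v m"
proof -
  let ?G = "A\<^sup>T * A" and ?c = "inv_mat (A\<^sup>T * A) *\<^sub>v (A\<^sup>T *\<^sub>v v)"
  have inv: "inv_mat ?G \<in> carrier_mat m m" "?G * inv_mat ?G = 1\<^sub>m m"
    using gram_mat_inverse[OF A ker] by auto
  have "A\<^sup>T *\<^sub>v (proj_mat A *\<^sub>v v) = ?G *\<^sub>v ?c"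
    unfolding proj_mat_mult_vec[OF A ker v]
    using assoc_mult_mat_vec[of "A\<^sup>T" m n A m ?c] A v inv(1) by auto
  also have "\<dots> = (?G * inv_mat ?G) *\<^sub>v (A\<^sup>T *\<^sub>v v)"
    using A v inv(1) by (subst assoc_mult_mat_vec[of _ m m _ m]) auto
  also have "\<dots> = A\<^sup>T *\<^sub>v v" using inv(2) A v by simp
  finally show ?thesis
    using A v proj_mat_carrier[OF A] by (simp add: mult_minus_distrib_mat_vec)
qed

lemma proj_mat_mult_vec_unique:
  assumes A: "(A :: real mat) \<in> carrier_mat n m" and ker: "trivial_kernel A"
    and v: "v \<in> carrier_vec n" and c: "c \<in> carrier_vec m"
    and orth: "A\<^sup>T *\<^sub>v (v - A *\<^sub>v c) = 0\<^sub>v m"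
  shows "proj_mat A *\<^sub>v v = A *\<^sub>v c"
proof -
  let ?G = "A\<^sup>T * A"
  have inv: "inv_mat ?G \<in> carrier_mat m m" "inv_mat ?G * ?G = 1\<^sub>m m"
    using gram_mat_inverse[OF A ker] by auto
  have Gc: "?G *\<^sub>v c = A\<^sup>T *\<^sub>v (A *\<^sub>v c)"
    using A c by (intro assoc_mult_mat_vec) auto
  have "A\<^sup>T *\<^sub>v v - A\<^sup>T *\<^sub>v (A *\<^sub>v c) = A\<^sup>T *\<^sub>v (v - A *\<^sub>v c)"
    using A v c by (intro mult_minus_distrib_mat_vec[symmetric]) auto
  also have "\<dots> = 0\<^sub>v m" by (rule orth)
  finally have normal_eq: "A\<^sup>T *\<^sub>v v = ?G *\<^sub>v c"
    unfolding Gc by (rule vec_eq_if_diff_eq_0[rotated 2]) (use A v c in auto)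
  have "c = (inv_mat ?G * ?G) *\<^sub>v c" using inv(2) c by simp
  also have "\<dots> = inv_mat ?G *\<^sub>v (A\<^sup>T *\<^sub>v v)"
    unfolding normal_eq using inv(1) A c by (intro assoc_mult_mat_vec) auto
  finally show ?thesis using proj_mat_mult_vec[OF A ker v] by simp
qed

lemma dim_drop_cols [simp]:
  "dim_row (drop_cols j A) = dim_row A" "dim_col (drop_cols j A) = dim_col A - j"
  unfolding drop_cols_def by auto

lemma drop_cols_carrier: "A \<in> carrier_mat n m \<Longrightarrow> drop_cols j A \<in> carrier_mat n (m - j)"
  by auto

lemma take_cols_carrier:
  "A \<in> carrier_mat n m \<Longrightarrow> k \<le> m \<Longrightarrow> take_cols k A \<in> carrier_mat n k"
  unfolding take_cols_def by (auto simp: min_def)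

lemma drop_cols_index:
  "A \<in> carrier_mat n m \<Longrightarrow> i < n \<Longrightarrow> l < m - j \<Longrightarrow>
   drop_cols j A $$ (i, l) = A $$ (i, j + l)"
  unfolding drop_cols_def mat_of_cols_def by auto

lemma take_cols_index:
  "A \<in> carrier_mat n m \<Longrightarrow> i < n \<Longrightarrow> l < k \<Longrightarrow> k \<le> m \<Longrightarrow>
   take_cols k A $$ (i, l) = A $$ (i, l)"
  unfolding take_cols_def mat_of_cols_def by auto

lemma col_drop_cols:
  "A \<in> carrier_mat n m \<Longrightarrow> l < m - j \<Longrightarrow> col (drop_cols j A) l = col A (j + l)"
  unfolding drop_cols_def by (subst col_mat_of_cols) auto

lemma drop_cols_0 [simp]: "drop_cols 0 A = A"
  unfolding drop_cols_def by simp

lemma drop_cols_drop_cols: "drop_cols i (drop_cols j A) = drop_cols (i + j) A"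
proof -
  have "set (drop j (cols A)) \<subseteq> carrier_vec (dim_row A)"
    by (meson cols_dim order_trans set_drop_subset)
  then show ?thesis unfolding drop_cols_def by (simp add: add.commute)
qed

lemma mult_vec_take_drop_cols:
  assumes A: "A \<in> carrier_mat n m" and k: "k \<le> m" and c: "c \<in> carrier_vec m"
  shows "A *\<^sub>v c = take_cols k A *\<^sub>v take_vec k c + drop_cols k A *\<^sub>v vec (m - k) (\<lambda>l. c $ (k + l))"
    (is "_ = ?rhs")
proof (rule eq_vecI)
  fix i assume "i < dim_vec ?rhs"
  then have i: "i < n" using A by simp
  let ?f = "\<lambda>j. A $$ (i, j) * c $ j"
  have "(A *\<^sub>v c) $ i = sum ?f {0..<k} + sum ?f {k..<m}"
    using A c i k by (simp add: scalar_prod_def sum.atLeastLessThan_concat)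
  also have "sum ?f {0..<k} = (take_cols k A *\<^sub>v take_vec k c) $ i"
    using A i k take_cols_carrier[OF A k] by (simp add: scalar_prod_def take_vec_def take_cols_index)
  also have "sum ?f {k..<m} = (\<Sum>l = 0..<m - k. ?f (l + k))"
    using sum.shift_bounds_nat_ivl[of ?f 0 k "m - k"] k by simp
  also have "\<dots> = (drop_cols k A *\<^sub>v vec (m - k) (\<lambda>l. c $ (k + l))) $ i"
    using A i drop_cols_carrier[OF A, of k]
    by (simp add: scalar_prod_def drop_cols_index add.commute)
  finally show "(A *\<^sub>v c) $ i = ?rhs $ i"
    using i A by simp
qed (use A take_cols_carrier[OF A k] in simp)

lemma drop_cols_mult_vec:
  assumes A: "A \<in> carrier_mat n m" and j: "j \<le> m" and c: "c \<in> carrier_vec (m - j)"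
  shows "drop_cols j A *\<^sub>v c = A *\<^sub>v (0\<^sub>v j @\<^sub>v c)"
proof -
  have "take_vec j (0\<^sub>v j @\<^sub>v c) = 0\<^sub>v j"
    and "vec (m - j) (\<lambda>l. (0\<^sub>v j @\<^sub>v c) $ (j + l)) = c"
    using c by (auto simp: take_vec_def)
  moreover have "take_cols j A *\<^sub>v 0\<^sub>v j = 0\<^sub>v n"
    using take_cols_carrier[OF A j] by (intro eq_vecI) auto
  moreover have "0\<^sub>v j @\<^sub>v c \<in> carrier_vec m"
    using append_carrier_vec[OF zero_carrier_vec[of j] c] j by simp
  ultimately show ?thesis
    using mult_vec_take_drop_cols[OF A j, of "0\<^sub>v j @\<^sub>v c"] drop_cols_carrier[OF A, of j] c
    by simp
qed

lemma trivial_kernel_drop_cols: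
  assumes A: "A \<in> carrier_mat n m" and ker: "trivial_kernel A" and j: "j \<le> m"
  shows "trivial_kernel (drop_cols j A)"
  unfolding trivial_kernel_def
proof (intro ballI impI)
  fix c assume c: "c \<in> carrier_vec (dim_col (drop_cols j A))"
    and z: "drop_cols j A *\<^sub>v c = 0\<^sub>v (dim_row (drop_cols j A))"
  have c': "c \<in> carrier_vec (m - j)" using c A by simp
  have padded_0: "0\<^sub>v j @\<^sub>v c = 0\<^sub>v m"
    using z drop_cols_mult_vec[OF A j c'] append_carrier_vec[OF zero_carrier_vec[of j] c'] A j
    by (intro trivial_kernelD[OF ker A]) auto
  have "c $ l = 0" if "l < m - j" for l
  proof -
    have "(0\<^sub>v j @\<^sub>v c) $ (j + l) = c $ l" using that carrier_vecD[OF c'] by simp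
    then show ?thesis unfolding padded_0 using that by simp
  qed
  then show "c = 0\<^sub>v (dim_col (drop_cols j A))"
    using c' A by (intro eq_vecI) auto
qed

lemma transpose_mult_vec_eq_0I:
  assumes A: "A \<in> carrier_mat n (Suc m)" and u: "u \<in> carrier_vec n"
    and first: "col A 0 \<bullet> u = 0" and rest: "(drop_cols 1 A)\<^sup>T *\<^sub>v u = 0\<^sub>v m"
  shows "A\<^sup>T *\<^sub>v u = 0\<^sub>v (Suc m)"
proof (rule eq_vecI)
  fix j assume "j < dim_vec (0\<^sub>v (Suc m))"
  then have j: "j < Suc m" by simp
  show "(A\<^sup>T *\<^sub>v u) $ j = 0\<^sub>v (Suc m) $ j"
  proof (cases j)
    case 0
    then show ?thesis using A first by simp
  next
    case (Suc l)
    have "((drop_cols 1 A)\<^sup>T *\<^sub>v u) $ l = 0" using rest Suc j by simp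
    then have "col (drop_cols 1 A) l \<bullet> u = 0" using A Suc j by simp
    then show ?thesis using A Suc j col_drop_cols[OF A, of l 1] by simp
  qed
qed (use A in simp)

section \<open>Splitting off the first column\<close>

locale first_column_split =
  fixes A :: "real mat" and n m :: nat
  assumes A: "A \<in> carrier_mat n (Suc m)" and ker: "trivial_kernel A"
begin

abbreviation rest where "rest \<equiv> drop_cols 1 A"

definition resid where "resid = col A 0 - proj_mat rest *\<^sub>v col A 0"

lemma rest_carrier: "rest \<in> carrier_mat n m"
  using drop_cols_carrier[OF A, of 1] by simp

lemma rest_trivial_kernel: "trivial_kernel rest"
  using trivial_kernel_drop_cols[OF A ker] by simp

lemma col_0_carrier: "col A 0 \<in> carrier_vec n"
  using A by auto

lemma resid_carrier: "resid \<in> carrier_vec n"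
  unfolding resid_def using col_0_carrier proj_mat_carrier[OF rest_carrier] by simp

lemma rest_transpose_mult_resid: "rest\<^sup>T *\<^sub>v resid = 0\<^sub>v m"
  unfolding resid_def using transpose_mult_proj_residual[OF rest_carrier rest_trivial_kernel col_0_carrier] .

lemma resid_eq_mult_vec:
  obtains c where "c \<in> carrier_vec (Suc m)" "c $ 0 = 1" "resid = A *\<^sub>v c"
proof
  let ?b = "inv_mat (rest\<^sup>T * rest) *\<^sub>v (rest\<^sup>T *\<^sub>v col A 0)"
  let ?c = "unit_vec (Suc m) 0 - (0\<^sub>v 1 @\<^sub>v ?b)"
  have b: "?b \<in> carrier_vec m"
    using gram_mat_inverse(1)[OF rest_carrier rest_trivial_kernel] rest_carrier col_0_carrier
    by (intro mult_mat_vec_carrier) auto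
  have b': "0\<^sub>v 1 @\<^sub>v ?b \<in> carrier_vec (Suc m)"
    using append_carrier_vec[OF zero_carrier_vec[of 1] b] by simp
  show "?c \<in> carrier_vec (Suc m)" using b' by simp
  show "?c $ 0 = 1" using b' by simp
  have "proj_mat rest *\<^sub>v col A 0 = rest *\<^sub>v ?b"
    by (rule proj_mat_mult_vec[OF rest_carrier rest_trivial_kernel col_0_carrier])
  also have "\<dots> = A *\<^sub>v (0\<^sub>v 1 @\<^sub>v ?b)"
    using drop_cols_mult_vec[OF A, of 1 ?b] b by simp
  finally have "resid = A *\<^sub>v unit_vec (Suc m) 0 - A *\<^sub>v (0\<^sub>v 1 @\<^sub>v ?b)"
    unfolding resid_def mult_vec_unit_vec[OF A zero_less_Suc] by simp
  also have "\<dots> = A *\<^sub>v ?c"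
    using A b' by (intro mult_minus_distrib_mat_vec[symmetric]) auto
  finally show "resid = A *\<^sub>v ?c" .
qed

lemma resid_sqnorm_pos: "resid \<bullet> resid > 0"
proof -
  obtain c where c: "c \<in> carrier_vec (Suc m)" "c $ 0 = 1" "resid = A *\<^sub>v c"
    using resid_eq_mult_vec .
  have "c \<noteq> 0\<^sub>v (Suc m)" using c(2) by auto
  then have "resid \<noteq> 0\<^sub>v n" using trivial_kernelD[OF ker A c(1)] c(3) by auto
  then show ?thesis using conjugate_square_greater_0_vec[OF resid_carrier] by simp
qed

lemma resid_orthogonal_rest:
  assumes c: "c \<in> carrier_vec m"
  shows "resid \<bullet> (rest *\<^sub>v c) = 0"
  using scalar_prod_mult_vec_eq_0[OF rest_carrier c resid_carrier rest_transpose_mult_resid]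
    comm_scalar_prod[OF resid_carrier, of "rest *\<^sub>v c"] rest_carrier c by simp

lemma transpose_mult_split_residual:
  assumes v: "v \<in> carrier_vec n"
  shows "A\<^sup>T *\<^sub>v ((v - proj_mat rest *\<^sub>v v) - ((resid \<bullet> v) / (resid \<bullet> resid)) \<cdot>\<^sub>v resid)
    = 0\<^sub>v (Suc m)"
proof -
  define \<gamma> where "\<gamma> = (resid \<bullet> v) / (resid \<bullet> resid)"
  define r where "r = (v - proj_mat rest *\<^sub>v v) - \<gamma> \<cdot>\<^sub>v resid"
  have res: "v - proj_mat rest *\<^sub>v v \<in> carrier_vec n"
    using v proj_mat_carrier[OF rest_carrier] by simp
  have r: "r \<in> carrier_vec n" unfolding r_def using res resid_carrier by simp
  have "rest\<^sup>T *\<^sub>v r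
      = rest\<^sup>T *\<^sub>v (v - proj_mat rest *\<^sub>v v) - rest\<^sup>T *\<^sub>v (\<gamma> \<cdot>\<^sub>v resid)"
    unfolding r_def using rest_carrier res resid_carrier by (intro mult_minus_distrib_mat_vec) auto
  also have "\<dots> = 0\<^sub>v m"
    using transpose_mult_proj_residual[OF rest_carrier rest_trivial_kernel v]
      mult_mat_vec[of "rest\<^sup>T" m n resid \<gamma>] rest_transpose_mult_resid rest_carrier resid_carrier
    by simp
  finally have rest_r: "rest\<^sup>T *\<^sub>v r = 0\<^sub>v m" .
  have range_rest_r: "(rest *\<^sub>v c) \<bullet> r = 0" if "c \<in> carrier_vec m" for c
    using scalar_prod_mult_vec_eq_0[OF rest_carrier that r rest_r] .
  have "resid \<bullet> (proj_mat rest *\<^sub>v v) = 0"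
    unfolding proj_mat_mult_vec[OF rest_carrier rest_trivial_kernel v]
    using gram_mat_inverse(1)[OF rest_carrier rest_trivial_kernel] rest_carrier v
    by (intro resid_orthogonal_rest) auto
  then have "resid \<bullet> r = resid \<bullet> v - \<gamma> * (resid \<bullet> resid)"
    unfolding r_def using resid_carrier v res proj_mat_carrier[OF rest_carrier]
    by (simp add: scalar_prod_minus_distrib[of _ n])
  then have resid_r: "resid \<bullet> r = 0" unfolding \<gamma>_def using resid_sqnorm_pos by simp
  have "(proj_mat rest *\<^sub>v col A 0) \<bullet> r = 0"
    unfolding proj_mat_mult_vec[OF rest_carrier rest_trivial_kernel col_0_carrier]
    using gram_mat_inverse(1)[OF rest_carrier rest_trivial_kernel] rest_carrier col_0_carrier
    by (intro range_rest_r) auto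
  then have "col A 0 \<bullet> r = 0"
    using resid_r minus_scalar_prod_distrib[OF col_0_carrier _ r, of "proj_mat rest *\<^sub>v col A 0"]
      proj_mat_carrier[OF rest_carrier] col_0_carrier unfolding resid_def by simp
  then show ?thesis
    using transpose_mult_vec_eq_0I[OF A r _ rest_r] unfolding r_def \<gamma>_def by simp
qed

lemma proj_mat_mult_vec_split:
  assumes v: "v \<in> carrier_vec n"
  shows "proj_mat A *\<^sub>v v = proj_mat rest *\<^sub>v v + ((resid \<bullet> v) / (resid \<bullet> resid)) \<cdot>\<^sub>v resid"
proof -
  define \<gamma> where "\<gamma> = (resid \<bullet> v) / (resid \<bullet> resid)"
  define b where "b = inv_mat (rest\<^sup>T * rest) *\<^sub>v (rest\<^sup>T *\<^sub>v v)"
  obtain cw where cw: "cw \<in> carrier_vec (Suc m)" "resid = A *\<^sub>v cw"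
    using resid_eq_mult_vec by metis
  have b: "b \<in> carrier_vec m" unfolding b_def
    using gram_mat_inverse(1)[OF rest_carrier rest_trivial_kernel] rest_carrier v
    by (intro mult_mat_vec_carrier) auto
  have b': "0\<^sub>v 1 @\<^sub>v b \<in> carrier_vec (Suc m)"
    using append_carrier_vec[OF zero_carrier_vec[of 1] b] by simp
  let ?c = "(0\<^sub>v 1 @\<^sub>v b) + \<gamma> \<cdot>\<^sub>v cw"
  have c: "?c \<in> carrier_vec (Suc m)" using b' cw(1) by simp
  have "A *\<^sub>v ?c = A *\<^sub>v (0\<^sub>v 1 @\<^sub>v b) + A *\<^sub>v (\<gamma> \<cdot>\<^sub>v cw)"
    using A b' cw(1) by (intro mult_add_distrib_mat_vec) auto
  also have "A *\<^sub>v (0\<^sub>v 1 @\<^sub>v b) = proj_mat rest *\<^sub>v v"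
    unfolding proj_mat_mult_vec[OF rest_carrier rest_trivial_kernel v] b_def[symmetric]
    using drop_cols_mult_vec[OF A, of 1 b] b by simp
  also have "A *\<^sub>v (\<gamma> \<cdot>\<^sub>v cw) = \<gamma> \<cdot>\<^sub>v resid"
    unfolding cw(2) using A cw(1) by (rule mult_mat_vec)
  finally have Ac: "A *\<^sub>v ?c = proj_mat rest *\<^sub>v v + \<gamma> \<cdot>\<^sub>v resid" .
  have "v - A *\<^sub>v ?c = (v - proj_mat rest *\<^sub>v v) - \<gamma> \<cdot>\<^sub>v resid"
    unfolding Ac using v resid_carrier proj_mat_carrier[OF rest_carrier] by (intro eq_vecI) auto
  then have "A\<^sup>T *\<^sub>v (v - A *\<^sub>v ?c) = 0\<^sub>v (Suc m)"
    using transpose_mult_split_residual[OF v] unfolding \<gamma>_def by simp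
  then show ?thesis
    using proj_mat_mult_vec_unique[OF A ker v c] Ac unfolding \<gamma>_def by simp
qed

lemma sqnorm_residual_rest:
  assumes v: "v \<in> carrier_vec n"
  shows "sqnorm (v - proj_mat rest *\<^sub>v v)
       = sqnorm (v - proj_mat A *\<^sub>v v) + (resid \<bullet> v)\<^sup>2 / (resid \<bullet> resid)"
proof -
  define \<gamma> where "\<gamma> = (resid \<bullet> v) / (resid \<bullet> resid)"
  let ?r = "v - proj_mat A *\<^sub>v v"
  have r: "?r \<in> carrier_vec n" using v proj_mat_carrier[OF A] by simp
  obtain cw where cw: "cw \<in> carrier_vec (Suc m)" "resid = A *\<^sub>v cw"
    using resid_eq_mult_vec by metis
  have "v - proj_mat rest *\<^sub>v v = ?r + \<gamma> \<cdot>\<^sub>v resid"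
    unfolding proj_mat_mult_vec_split[OF v] \<gamma>_def
    using v resid_carrier proj_mat_carrier[OF rest_carrier] by (intro eq_vecI) auto
  moreover have "?r \<bullet> (\<gamma> \<cdot>\<^sub>v resid) = 0"
    using scalar_prod_mult_vec_eq_0[OF A cw(1) r transpose_mult_proj_residual[OF A ker v]]
      comm_scalar_prod[OF r resid_carrier] r resid_carrier cw(2) by simp
  moreover have "sqnorm (\<gamma> \<cdot>\<^sub>v resid) = (resid \<bullet> v)\<^sup>2 / (resid \<bullet> resid)"
    unfolding sqnorm_def \<gamma>_def using resid_carrier resid_sqnorm_pos
    by (simp add: power2_eq_square)
  ultimately show ?thesis
    using sqnorm_add_orthogonal[OF r, of "\<gamma> \<cdot>\<^sub>v resid"] resid_carrier by simp
qed

end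

section \<open>The F statistic\<close>

lemma Vfirst_transpose_mult_index:
  "t < k \<Longrightarrow> ((Vfirst X k)\<^sup>T *\<^sub>v z) $ t = Vcol X (Suc t) \<bullet> z"
proof -
  assume t: "t < k"
  have "dim_vec (Vcol X i) = dim_row X" for i
    unfolding Vcol_def Let_def by simp
  then have "Vcol X i \<in> carrier_vec (dim_row X)" for i
    by (rule carrier_vecI)
  then have "col (Vfirst X k) t = Vcol X (Suc t)"
    unfolding Vfirst_def using t by (subst col_mat_of_cols) (auto simp del: upt_Suc)
  then show ?thesis using t unfolding Vfirst_def by simp
qed

lemma sqnorm_Vfirst_transpose_mult:
  "sqnorm ((Vfirst X k)\<^sup>T *\<^sub>v z) = (\<Sum>t<k. (Vcol X (Suc t) \<bullet> z)\<^sup>2)"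
proof -
  have dim: "dim_vec ((Vfirst X k)\<^sup>T *\<^sub>v z) = k" unfolding Vfirst_def by simp
  have "sqnorm ((Vfirst X k)\<^sup>T *\<^sub>v z)
      = (\<Sum>t\<in>{0..<k}. ((Vfirst X k)\<^sup>T *\<^sub>v z) $ t * ((Vfirst X k)\<^sup>T *\<^sub>v z) $ t)"
    unfolding sqnorm_def scalar_prod_def dim by (rule refl)
  also have "\<dots> = (\<Sum>t\<in>{0..<k}. (Vcol X (Suc t) \<bullet> z)\<^sup>2)"
    by (intro sum.cong refl) (simp only: atLeastLessThan_iff Vfirst_transpose_mult_index power2_eq_square)
  finally show ?thesis by (simp add: atLeast0LessThan)
qed

lemma sigma_hat_squared:
  assumes "X \<in> carrier_mat n d" "y \<in> carrier_vec n"
  shows "(sigma_hat X y k)\<^sup>2 = sqnorm (y - proj_mat (drop_cols k X) *\<^sub>v y)"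
  using assms one_minus_mat_mult_vec[OF proj_mat_carrier[OF drop_cols_carrier[OF assms(1)]] assms(2)]
  by (simp add: sigma_hat_def sqnorm_nonneg)

locale full_column_rank =
  fixes X :: "real mat" and n d :: nat
  assumes X: "X \<in> carrier_mat n d" and rank: "vec_space.rank n X = d"
begin

lemma X_trivial_kernel: "trivial_kernel X"
  using trivial_kernel_if_full_rank[OF X rank] .

lemma first_column_split_drop_cols: "t < d \<Longrightarrow> first_column_split (drop_cols t X) n (d - Suc t)"
  using drop_cols_carrier[OF X, of t] trivial_kernel_drop_cols[OF X X_trivial_kernel, of t]
  by unfold_locales (simp_all add: Suc_diff_Suc)

(* Columns are counted from 0 here, whereas Vcol is 1-indexed as in the paper. *)
definition col_resid where "col_resid t = first_column_split.resid (drop_cols t X)"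

lemma Vcol_Suc:
  "t < d \<Longrightarrow> Vcol X (Suc t) = (1 / sqrt (col_resid t \<bullet> col_resid t)) \<cdot>\<^sub>v col_resid t"
proof -
  assume t: "t < d"
  have "(1\<^sub>m n - proj_mat (drop_cols (Suc t) X)) *\<^sub>v col X t
      = col X t - proj_mat (drop_cols (Suc t) X) *\<^sub>v col X t"
    using X t proj_mat_carrier[OF drop_cols_carrier[OF X]] by (intro one_minus_mat_mult_vec) auto
  also have "\<dots> = col_resid t"
    unfolding col_resid_def first_column_split.resid_def[OF first_column_split_drop_cols[OF t]]
    using col_drop_cols[OF X, of 0 t] drop_cols_drop_cols[of 1 t X] t by simp
  finally show ?thesis unfolding Vcol_def Let_def sqnorm_def using X by simp
qed

lemma sqnorm_residual_drop_cols_Suc: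
  assumes t: "t < d" and y: "y \<in> carrier_vec n"
  shows "sqnorm (y - proj_mat (drop_cols (Suc t) X) *\<^sub>v y)
       = sqnorm (y - proj_mat (drop_cols t X) *\<^sub>v y) + (Vcol X (Suc t) \<bullet> y)\<^sup>2"
proof -
  interpret S: first_column_split "drop_cols t X" n "d - Suc t"
    using first_column_split_drop_cols[OF t] .
  have "(Vcol X (Suc t) \<bullet> y)\<^sup>2 = (col_resid t \<bullet> y)\<^sup>2 / (col_resid t \<bullet> col_resid t)"
    unfolding Vcol_Suc[OF t] using S.resid_carrier S.resid_sqnorm_pos y
    by (simp add: col_resid_def power_divide)
  then show ?thesis
    using S.sqnorm_residual_rest[OF y] drop_cols_drop_cols[of 1 t X] by (simp add: col_resid_def)
qed

lemma sqnorm_residual_drop_cols: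
  assumes "k \<le> d" and y: "y \<in> carrier_vec n"
  shows "sqnorm (y - proj_mat (drop_cols k X) *\<^sub>v y)
       = sqnorm (y - proj_mat X *\<^sub>v y) + (\<Sum>t<k. (Vcol X (Suc t) \<bullet> y)\<^sup>2)"
  using assms(1)
proof (induction k)
  case 0
  then show ?case by simp
next
  case (Suc k)
  then show ?case using sqnorm_residual_drop_cols_Suc[of k, OF _ y] by simp
qed

lemma beta_ols_carrier: "y \<in> carrier_vec n \<Longrightarrow> beta_ols X y \<in> carrier_vec d"
  unfolding beta_ols_def using gram_mat_inverse(1)[OF X X_trivial_kernel] X
  by (intro mult_mat_vec_carrier) auto

lemma col_resid_scalar_prod_fitted_head:
  assumes t: "t < k" and k: "k \<le> d" and y: "y \<in> carrier_vec n"
  shows "col_resid t \<bullet> (take_cols k X *\<^sub>v take_vec k (beta_ols X y)) = col_resid t \<bullet> y"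
proof -
  interpret S: first_column_split "drop_cols t X" n "d - Suc t"
    using first_column_split_drop_cols t k by simp
  let ?\<beta> = "beta_ols X y"
  let ?head = "take_cols k X *\<^sub>v take_vec k ?\<beta>"
  let ?\<beta>\<^sub>2 = "vec (d - k) (\<lambda>l. ?\<beta> $ (k + l))"
  have resid: "col_resid t \<in> carrier_vec n" unfolding col_resid_def using S.resid_carrier .
  have head: "?head \<in> carrier_vec n"
    using take_cols_carrier[OF X k] by (simp add: take_vec_def)
  have "drop_cols k X = drop_cols (k - Suc t) S.rest"
    using t by (simp add: drop_cols_drop_cols)
  then have "drop_cols k X *\<^sub>v ?\<beta>\<^sub>2 = S.rest *\<^sub>v (0\<^sub>v (k - Suc t) @\<^sub>v ?\<beta>\<^sub>2)"
    using drop_cols_mult_vec[OF S.rest_carrier, of "k - Suc t" ?\<beta>\<^sub>2] t k by simp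
  then have tail_orth: "col_resid t \<bullet> (drop_cols k X *\<^sub>v ?\<beta>\<^sub>2) = 0"
    unfolding col_resid_def using S.resid_orthogonal_rest t k
      append_carrier_vec[OF zero_carrier_vec[of "k - Suc t"], of ?\<beta>\<^sub>2 "d - k"] by simp
  have fitted: "X *\<^sub>v ?\<beta> = proj_mat X *\<^sub>v y"
    unfolding beta_ols_def proj_mat_mult_vec[OF X X_trivial_kernel y] ..
  have "col_resid t \<bullet> (X *\<^sub>v ?\<beta>)
      = col_resid t \<bullet> ?head + col_resid t \<bullet> (drop_cols k X *\<^sub>v ?\<beta>\<^sub>2)"
    unfolding mult_vec_take_drop_cols[OF X k beta_ols_carrier[OF y]]
    using resid head drop_cols_carrier[OF X, of k] by (simp add: scalar_prod_add_distrib[of _ n])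
  then have head_eq: "col_resid t \<bullet> ?head = col_resid t \<bullet> (proj_mat X *\<^sub>v y)"
    using tail_orth fitted by simp
  obtain c where c: "c \<in> carrier_vec (Suc (d - Suc t))" "col_resid t = drop_cols t X *\<^sub>v c"
    using S.resid_eq_mult_vec unfolding col_resid_def by metis
  have "col_resid t = X *\<^sub>v (0\<^sub>v t @\<^sub>v c)"
    using c drop_cols_mult_vec[OF X, of t c] t k by (simp add: Suc_diff_Suc)
  moreover have "0\<^sub>v t @\<^sub>v c \<in> carrier_vec d"
    using append_carrier_vec[OF zero_carrier_vec[of t] c(1)] t k by simp
  ultimately have "col_resid t \<bullet> (y - proj_mat X *\<^sub>v y) = 0"
    using scalar_prod_mult_vec_eq_0[OF X _ _ transpose_mult_proj_residual[OF X X_trivial_kernel y]]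
      y proj_mat_carrier[OF X] by simp
  then show ?thesis
    using head_eq resid y proj_mat_carrier[OF X] by (simp add: scalar_prod_minus_distrib[of _ n])
qed

lemma Vcol_scalar_prod_fitted_head:
  assumes t: "t < k" and k: "k \<le> d" and y: "y \<in> carrier_vec n"
  shows "Vcol X (Suc t) \<bullet> (take_cols k X *\<^sub>v take_vec k (beta_ols X y)) = Vcol X (Suc t) \<bullet> y"
proof -
  have "col_resid t \<in> carrier_vec n"
    unfolding col_resid_def
    using first_column_split.resid_carrier[OF first_column_split_drop_cols] t k by simp
  then show ?thesis
    unfolding Vcol_Suc[OF less_le_trans[OF t k]] using col_resid_scalar_prod_fitted_head[OF assms]
      take_cols_carrier[OF X k] y by (simp add: take_vec_def)
qed

end

theorem lemmaC4:
  fixes n d k :: nat and X :: "real mat" and y :: "real vec"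
  assumes "n > d"
    and "X \<in> carrier_mat n d"
    and "vec_space.rank n X = d"
    and "1 \<le> k" and "k < d"
    and "y \<in> carrier_vec n"
    and "y \<notin> vec_space.col_space n X"
  shows "F_stat X y k =
     (sqnorm ((Vfirst X k)\<^sup>T *\<^sub>v (take_cols k X *\<^sub>v take_vec k (beta_ols X y))) / real k)
     / (((sigma_hat X y k)\<^sup>2
          - sqnorm ((Vfirst X k)\<^sup>T *\<^sub>v (take_cols k X *\<^sub>v take_vec k (beta_ols X y))))
        / (real n - real d))"
proof -
  interpret full_column_rank X n d using assms(2,3) by unfold_locales
  have k: "k \<le> d" using assms(5) by simp
  let ?S = "\<Sum>t<k. (Vcol X (Suc t) \<bullet> y)\<^sup>2"
  have numerator: "sqnorm ((Vfirst X k)\<^sup>T *\<^sub>v (take_cols k X *\<^sub>v take_vec k (beta_ols X y))) = ?S"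
    unfolding sqnorm_Vfirst_transpose_mult using Vcol_scalar_prod_fitted_head[OF _ k assms(6)] by simp
  have residuals: "sqnorm (y - proj_mat (drop_cols k X) *\<^sub>v y) = sqnorm (y - proj_mat X *\<^sub>v y) + ?S"
    using sqnorm_residual_drop_cols[OF k assms(6)] .
  (* n > d, 1 \<le> k and y \<notin> col(X) only make the denominators nonzero; the identity
     holds without them since x / 0 = 0. *)
  show ?thesis
    unfolding numerator sigma_hat_squared[OF assms(2,6)] residuals F_stat_def using assms(2) by simp
qed

end
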